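(* Under the Standing Setup and Assumption (G) described in the context, suppose there exists exactly one $a\in V_k$ such that $\mathcal{E}(f\oplus\varphi_a)\neq0$. Then $$\mathcal{E}(PC_{f,\mathcal{T}})=\big[\mathcal{E}(f\oplus\varphi_a)\big]^{2^s}.$$ In particular, if $f$ is $(k-1)$-resilient, then $\mathcal{E}(PC_{f,\mathcal{T}})=\big[\mathcal{E}(f\oplus\varphi_{1_k})\big]^{2^s}$, where $1_k\in\mathbf{F}_2^n$ has its first $k$ coordinates equal to $1$ and the others equal to $0$.
   Context: Standing Setup. $f:\mathbf{F}_2^n\to\mathbf{F}_2$ is a Boolean function. $\mathbf{x}_1,\ldots,\mathbf{x}_n$ are binary sequences, $\mathbf{x}_j=(x_j(t))_{t\ge0}$, with $\mathbf{x}_j$ periodic of period $T_j$, i.e. $x_j(t)=x_j(t \bmod T_j)$. Let $s\ge1$ and integers $0=\ell_1<\ell_2<\cdots<\ell_{s+1}=k\le n$; variable $j$ belongs to block $i$ if $\ell_i<j\le\ell_{i+1}$. For $1\le i\le s$, $M_i=q_i\,\mathrm{lcm}(T_{\ell_i+1},\ldots,T_{\ell_{i+1}})$ with $q_i$ a positive integer. For $c=\sum_{i=1}^s c_i2^{i-1}\in\{0,\ldots,2^s-1\}$ with $c_i\in\{0,1\}$, put $\tau_c=\sum_{i=1}^s c_iM_i$, and $\mathcal{T}=\{\tau_c\}$. The parity-check sequence is $PC_{f,\mathcal{T}}(t)=\bigoplus_{c=0}^{2^s-1} f\big(x_1(t+\tau_c),\ldots,x_n(t+\tau_c)\big)$.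 The bias of a Boolean function $h$ of $m$ variables is $\mathcal{E}(h)=2^{-m}\sum_{x\in\mathbf{F}_2^m}(-1)^{h(x)}$. The bias $\mathcal{E}(PC_{f,\mathcal{T}})$ is the bias of $PC_{f,\mathcal{T}}(t)$ (for a fixed $t\ge0$) viewed as a Boolean function of the $T_1+\cdots+T_n$ bits $x_j(0),\ldots,x_j(T_j-1)$, $1\le j\le n$; equivalently $\mathbb{E}[(-1)^{PC_{f,\mathcal{T}}(t)}]$ when these bits are independent and uniform. Assumption (G): (i) for every $j$ with $k<j\le n$, the $2^s$ integers $\tau_c$ are pairwise incongruent modulo $T_j$; (ii) for every $i\in\{1,\ldots,s\}$ and every $j$ in block $i$, the $2^{s-1}$ integers $\sum_{l\ne i}c_lM_l$ ($c_l\in\{0,1\}$) are pairwise incongruent modulo $T_j$. $V_k\subseteq\mathbf{F}_2^n$ is the subspace spanned by the first $k$ standard basis vectors. For $\beta\in\mathbf{F}_2^n$, $\varphi_\beta$ is the linear function $x\mapsto\beta\cdot x$. A Boolean function $f$ of $n$ variables is $t$-resilient if $\mathcal{E}(f\oplus\varphi_\beta)=0$ for every $\beta\in\mathbf{F}_2^n$ of Hamming weight at most $t$ (equivalently, $f$ is balanced and its output distribution is unchanged when any $t$ inputs are fixed). *)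

theory Defs
  imports Complex_Main
begin

text \<open>Binary vectors indexed by a set I: functions that are False outside I.
  F_2^n is bvecs {1..n} (coordinates numbered 1..n, as in the paper).\<close>
definition bvecs :: "'a set \<Rightarrow> ('a \<Rightarrow> bool) set" where
  "bvecs I = {x. \<forall>i. x i \<longrightarrow> i \<in> I}"

definition bias_on :: "'a set \<Rightarrow> (('a \<Rightarrow> bool) \<Rightarrow> bool) \<Rightarrow> real" where
  "bias_on I h = (\<Sum>x\<in>bvecs I. (if h x then -1 else 1)) / 2 ^ card I"

definition lin :: "nat \<Rightarrow> (nat \<Rightarrow> bool) \<Rightarrow> (nat \<Rightarrow> bool) \<Rightarrow> bool" where
  "lin n \<beta> x = odd (card {j\<in>{1..n}. \<beta> j \<and> x j})"

definition bias_lin :: "nat \<Rightarrow> ((nat \<Rightarrow> bool) \<Rightarrow> bool) \<Rightarrow> (nat \<Rightarrow> bool) \<Rightarrow> real" where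
  "bias_lin n f \<beta> = bias_on {1..n} (\<lambda>x. f x \<noteq> lin n \<beta> x)"

definition hweight :: "nat \<Rightarrow> (nat \<Rightarrow> bool) \<Rightarrow> nat" where
  "hweight n \<beta> = card {j\<in>{1..n}. \<beta> j}"

definition resilient :: "nat \<Rightarrow> nat \<Rightarrow> ((nat \<Rightarrow> bool) \<Rightarrow> bool) \<Rightarrow> bool" where
  "resilient n t f \<longleftrightarrow> (\<forall>\<beta>\<in>bvecs {1..n}. hweight n \<beta> \<le> t \<longrightarrow> bias_lin n f \<beta> = 0)"

text \<open>tau_c = sum_{i=1}^s c_i M_i where c_i is bit (i-1) of c.\<close>
definition tau :: "nat \<Rightarrow> (nat \<Rightarrow> nat) \<Rightarrow> nat \<Rightarrow> nat" where
  "tau s M c = (\<Sum>i\<in>{1..s}. if odd (c div 2 ^ (i - 1)) then M i else 0)"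

definition tau_excl :: "nat \<Rightarrow> (nat \<Rightarrow> nat) \<Rightarrow> nat \<Rightarrow> nat \<Rightarrow> nat" where
  "tau_excl s M i c = (\<Sum>l\<in>{1..s} - {i}. if odd (c div 2 ^ (l - 1)) then M l else 0)"

text \<open>The bits x_j(0..T_j-1) of the n periodic sequences, indexed by pairs (j,u).\<close>
definition seq_vars :: "nat \<Rightarrow> (nat \<Rightarrow> nat) \<Rightarrow> (nat \<times> nat) set" where
  "seq_vars n T = {(j, u). j \<in> {1..n} \<and> u < T j}"

definition seqv :: "(nat \<times> nat \<Rightarrow> bool) \<Rightarrow> (nat \<Rightarrow> nat) \<Rightarrow> nat \<Rightarrow> nat \<Rightarrow> bool" where
  "seqv X T j t = X (j, t mod T j)"

text \<open>Parity-check sequence PC(t) = XOR_{c<2^s} f(x_1(t+tau_c),...,x_n(t+tau_c)),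
  as a Boolean function of the sequence bits X.\<close>
definition PC :: "nat \<Rightarrow> nat \<Rightarrow> (nat \<Rightarrow> nat) \<Rightarrow> (nat \<Rightarrow> nat) \<Rightarrow> ((nat \<Rightarrow> bool) \<Rightarrow> bool)
    \<Rightarrow> nat \<Rightarrow> (nat \<times> nat \<Rightarrow> bool) \<Rightarrow> bool" where
  "PC n s M T f t X =
     odd (card {c\<in>{..<2 ^ s}.
        f (\<lambda>j. if j \<in> {1..n} then seqv X T j (t + tau s M c) else False)})"

definition bias_PC :: "nat \<Rightarrow> nat \<Rightarrow> (nat \<Rightarrow> nat) \<Rightarrow> (nat \<Rightarrow> nat) \<Rightarrow> ((nat \<Rightarrow> bool) \<Rightarrow> bool)
    \<Rightarrow> nat \<Rightarrow> real" where
  "bias_PC n s M T f t = bias_on (seq_vars n T) (PC n s M T f t)"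

end

theory Submission
  imports Defs
begin

text \<open>
  A bias is the uniform average of a sign (-1)^h, and the sign of the XOR
  defining PC is the product over the 2^s shifts c of the signs of f at the shifted
  inputs. Split each input of f into its head y (the first k coordinates) and tail w.
  (1) By Assumption (G)(i) the tail bits read at different shifts are distinct sequence
      bits, so averaging over them factorises: E(PC) is the average over the head bits
      of the product over c of g(y_c), where g(y) averages (-1)^f(y,w) over w.
  (2) The Walsh coefficients of g are the biases E(f xor phi_b), b in V_k; if only
      b = a contributes, Fourier inversion gives g(y) = E(f xor phi_a) (-1)^(a.y).
  (3) For j in block i, T_j divides M_i, so the shifts c and c + 2^(i-1) read the same
      bit of x_j; hence the characters (-1)^(a.y_c) pair off and their product is 1.
  So E(PC) = E(f xor phi_a)^(2^s); a (k-1)-resilient f leaves only a = 1_k. Only (G)(i)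
  and T_j | M_i are needed.
\<close>

section \<open>Signs and parities\<close>

definition sg :: "bool \<Rightarrow> real" where
  "sg b = (if b then -1 else 1)"

lemma sg_sq [simp]: "sg b * sg b = 1"
  by (simp add: sg_def)

lemma sg_TF [simp]: "sg True = -1" "sg False = 1"
  by (simp_all add: sg_def)

lemma sg_not: "sg (\<not> b) = - sg b"
  by (simp add: sg_def)

lemma sg_neq: "sg (p \<noteq> q) = sg p * sg q"
  by (simp add: sg_def)

lemma sg_odd_card:
  assumes "finite C"
  shows "sg (odd (card {c\<in>C. P c})) = (\<Prod>c\<in>C. sg (P c))"
  using assms
proof (induction C rule: finite_induct)
  case empty
  then show ?case by simp
next
  case (insert x F)
  have split: "(\<Prod>c\<in>insert x F. sg (P c)) = sg (P x) * (\<Prod>c\<in>F. sg (P c))"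
    using insert(1,2) by (rule prod.insert)
  show ?case
  proof (cases "P x")
    case True
    then have "{c \<in> insert x F. P c} = insert x {c\<in>F. P c}" by auto
    then have "card {c \<in> insert x F. P c} = Suc (card {c\<in>F. P c})"
      using insert(1,2) by simp
    then show ?thesis using split insert(3) True by (simp add: sg_not)
  next
    case False
    then have "{c \<in> insert x F. P c} = {c\<in>F. P c}" by auto
    then show ?thesis using split insert(3) False by simp
  qed
qed

section \<open>Uniform averages over Boolean vectors\<close>

definition avg :: "'a set \<Rightarrow> (('a \<Rightarrow> bool) \<Rightarrow> real) \<Rightarrow> real" where
  "avg I h = (\<Sum>x\<in>bvecs I. h x) / 2 ^ card I"

lemma bias_on_avg: "bias_on I h = avg I (\<lambda>x. sg (h x))"
  unfolding bias_on_def avg_def sg_def by simp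

lemma bvecs_eq: "bvecs I = (\<lambda>A x. x \<in> A) ` Pow I"
proof (rule set_eqI, rule iffI)
  fix x assume "x \<in> bvecs I"
  then have "x = (\<lambda>v. v \<in> {v. x v})" "{v. x v} \<in> Pow I" by (auto simp: bvecs_def)
  then show "x \<in> (\<lambda>A x. x \<in> A) ` Pow I" by blast
qed (auto simp: bvecs_def)

lemma finite_bvecs [simp]: "finite I \<Longrightarrow> finite (bvecs I)"
  by (simp add: bvecs_eq)

lemma card_bvecs: "finite I \<Longrightarrow> card (bvecs I) = 2 ^ card I"
proof -
  assume "finite I"
  have "inj_on (\<lambda>A x. x \<in> A) (Pow I)" by (auto simp: inj_on_def fun_eq_iff)
  then show ?thesis using \<open>finite I\<close> by (simp add: bvecs_eq card_image card_Pow)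
qed

lemma avg_const: "finite I \<Longrightarrow> avg I (\<lambda>_. c) = c"
  by (simp add: avg_def card_bvecs)

lemma avg_cong: "(\<And>x. x \<in> bvecs I \<Longrightarrow> f x = g x) \<Longrightarrow> avg I f = avg I g"
  unfolding avg_def by (metis sum.cong)

lemma avg_mult_right: "avg I (\<lambda>x. f x * c) = avg I f * c"
  unfolding avg_def by (simp add: sum_distrib_right)

lemma avg_mult_left: "avg I (\<lambda>x. c * f x) = c * avg I f"
  unfolding avg_def by (simp add: sum_distrib_left)

lemma avg_swap: "avg A (\<lambda>x. avg B (\<lambda>y. phi x y)) = avg B (\<lambda>y. avg A (\<lambda>x. phi x y))"
  unfolding avg_def sum_divide_distrib[symmetric] by (simp add: sum.swap[of _ "bvecs A"])

lemma sum_bvecs_Un: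
  assumes "A \<inter> B = {}"
  shows "(\<Sum>X\<in>bvecs (A \<union> B). phi X) = (\<Sum>X1\<in>bvecs A. \<Sum>X2\<in>bvecs B. phi (\<lambda>v. X1 v \<or> X2 v))"
proof -
  have "(\<Sum>X1\<in>bvecs A. \<Sum>X2\<in>bvecs B. phi (\<lambda>v. X1 v \<or> X2 v))
      = (\<Sum>p\<in>bvecs A \<times> bvecs B. phi (\<lambda>v. fst p v \<or> snd p v))"
    by (subst sum.cartesian_product) (simp add: case_prod_beta)
  also have "\<dots> = (\<Sum>X\<in>bvecs (A \<union> B). phi X)"
  proof (rule sum.reindex_bij_witness[where j="\<lambda>p v. fst p v \<or> snd p v"
          and i="\<lambda>X. (\<lambda>v. X v \<and> v \<in> A, \<lambda>v. X v \<and> v \<in> B)"])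
    fix a assume a: "a \<in> bvecs A \<times> bvecs B"
    obtain a1 a2 where "a = (a1, a2)" by fastforce
    with a have "\<forall>v. a1 v \<longrightarrow> v \<in> A" "\<forall>v. a2 v \<longrightarrow> v \<in> B" by (auto simp: bvecs_def)
    with \<open>a = (a1, a2)\<close> assms
    show "(\<lambda>v. (\<lambda>v. fst a v \<or> snd a v) v \<and> v \<in> A, \<lambda>v. (\<lambda>v. fst a v \<or> snd a v) v \<and> v \<in> B) = a"
      "(\<lambda>v. fst a v \<or> snd a v) \<in> bvecs (A \<union> B)"
      by (auto simp: fun_eq_iff bvecs_def)
  qed (auto simp: fun_eq_iff bvecs_def)
  finally show ?thesis by simp
qed

lemma avg_Un:
  assumes "finite A" "finite B" "A \<inter> B = {}"
  shows "avg (A \<union> B) phi = avg A (\<lambda>X1. avg B (\<lambda>X2. phi (\<lambda>v. X1 v \<or> X2 v)))"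
proof -
  have "card (A \<union> B) = card A + card B" using assms card_Un_disjoint by blast
  then show ?thesis
    unfolding avg_def sum_bvecs_Un[OF assms(3)]
    by (simp add: sum_divide_distrib[symmetric] power_add mult.commute)
qed

lemma avg_prod:
  assumes "finite C" and "finite S"
    and "\<forall>c\<in>C. P c \<subseteq> S"
    and "\<forall>c\<in>C. \<forall>c'\<in>C. c \<noteq> c' \<longrightarrow> P c \<inter> P c' = {}"
    and "\<forall>c\<in>C. \<forall>X Y. (\<forall>v\<in>P c. X v = Y v) \<longrightarrow> h c X = h c Y"
  shows "avg S (\<lambda>X. \<Prod>c\<in>C. h c X) = (\<Prod>c\<in>C. avg (P c) (h c))"
  using assms
proof (induction C arbitrary: S rule: finite_induct)
  case empty
  then show ?case by (simp add: avg_const)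
next
  case (insert c0 C S)
  define R where "R = S - P c0"
  have SU: "S = P c0 \<union> R" and D: "P c0 \<inter> R = {}" using insert.prems(2) unfolding R_def by auto
  have fP0: "finite (P c0)" and fR: "finite R"
    using insert.prems(1,2) unfolding R_def by (auto intro: finite_subset)
  have PR: "\<forall>c\<in>C. P c \<subseteq> R"
    using insert.hyps(2) insert.prems(2,3) unfolding R_def by fastforce
  have IH: "avg R (\<lambda>X. \<Prod>c\<in>C. h c X) = (\<Prod>c\<in>C. avg (P c) (h c))"
    using insert.IH[OF fR PR] insert.prems(3,4) by auto
  have factor: "(\<Prod>c\<in>insert c0 C. h c (\<lambda>v. X1 v \<or> X2 v)) = h c0 X1 * (\<Prod>c\<in>C. h c X2)"
    if X1: "X1 \<in> bvecs (P c0)" and X2: "X2 \<in> bvecs R" for X1 X2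
  proof -
    have "\<forall>v\<in>P c0. (X1 v \<or> X2 v) = X1 v" using X2 D unfolding bvecs_def by auto
    then have "h c0 (\<lambda>v. X1 v \<or> X2 v) = h c0 X1" using insert.prems(4) by auto
    moreover have "h c (\<lambda>v. X1 v \<or> X2 v) = h c X2" if c: "c \<in> C" for c
    proof -
      have "\<forall>v\<in>P c. (X1 v \<or> X2 v) = X2 v" using X1 PR c D unfolding bvecs_def by auto
      then show ?thesis using insert.prems(4) c by auto
    qed
    ultimately show ?thesis using insert.hyps(1,2) by simp
  qed
  have "avg S (\<lambda>X. \<Prod>c\<in>insert c0 C. h c X)
      = avg (P c0) (\<lambda>X1. avg R (\<lambda>X2. \<Prod>c\<in>insert c0 C. h c (\<lambda>v. X1 v \<or> X2 v)))"
    unfolding SU by (rule avg_Un[OF fP0 fR D])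
  also have "\<dots> = avg (P c0) (\<lambda>X1. avg R (\<lambda>X2. h c0 X1 * (\<Prod>c\<in>C. h c X2)))"
    by (intro avg_cong) (simp add: factor)
  also have "\<dots> = (\<Prod>c\<in>insert c0 C. avg (P c) (h c))"
    using insert.hyps(1,2) by (simp add: avg_mult_left avg_mult_right IH)
  finally show ?case .
qed

lemma avg_reindex:
  assumes "inj_on \<pi> J"
  shows "avg (\<pi> ` J) (\<lambda>z. G (\<lambda>j. j \<in> J \<and> z (\<pi> j))) = avg J G"
proof -
  have "(\<Sum>w\<in>bvecs J. G w) = (\<Sum>z\<in>bvecs (\<pi> ` J). G (\<lambda>j. j \<in> J \<and> z (\<pi> j)))"
  proof (rule sum.reindex_bij_witness[where i="\<lambda>z j. j \<in> J \<and> z (\<pi> j)"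
        and j="\<lambda>w v. v \<in> \<pi> ` J \<and> w (the_inv_into J \<pi> v)"])
    fix w assume w: "w \<in> bvecs J"
    show "(\<lambda>j. j \<in> J \<and> (\<pi> j \<in> \<pi> ` J \<and> w (the_inv_into J \<pi> (\<pi> j)))) = w"
      using w assms by (auto simp: fun_eq_iff bvecs_def the_inv_into_f_f inj_on_def; metis)
    then show "G (\<lambda>j. j \<in> J \<and> (\<pi> j \<in> \<pi> ` J \<and> w (the_inv_into J \<pi> (\<pi> j)))) = G w" by simp
  next
    fix z assume z: "z \<in> bvecs (\<pi> ` J)"
    show "(\<lambda>v. v \<in> \<pi> ` J \<and> (the_inv_into J \<pi> v \<in> J \<and> z (\<pi> (the_inv_into J \<pi> v)))) = z"
      using z assms by (auto simp: fun_eq_iff bvecs_def the_inv_into_f_f)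
  qed (auto simp: bvecs_def)
  moreover have "card (\<pi> ` J) = card J" using assms by (rule card_image)
  ultimately show ?thesis unfolding avg_def by simp
qed

lemma avg_prod_coord:
  assumes "finite K"
  shows "avg K (\<lambda>b. \<Prod>j\<in>K. phi j (b j)) = (\<Prod>j\<in>K. (phi j False + phi j True) / 2)"
proof -
  have single: "avg {j} (\<lambda>X. phi j (X j)) = (phi j False + phi j True) / 2" for j
  proof -
    have "bvecs {j} = {\<lambda>_. False, \<lambda>v. v = j}" by (auto simp: bvecs_def fun_eq_iff)
    moreover have "(\<lambda>_. False) \<noteq> (\<lambda>v. v = j)" by (auto simp: fun_eq_iff)
    ultimately show ?thesis unfolding avg_def by simp
  qed
  have "avg K (\<lambda>b. \<Prod>j\<in>K. phi j (b j)) = (\<Prod>j\<in>K. avg {j} (\<lambda>X. phi j (X j)))"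
    by (rule avg_prod[where P="\<lambda>j. {j}"]) (use assms in auto)
  then show ?thesis by (simp add: single)
qed

section \<open>Walsh--Fourier analysis on the first k coordinates\<close>

lemma sg_lin_prod:
  assumes "k \<le> n" "b \<in> bvecs {1..k}"
  shows "sg (lin n b y) = (\<Prod>j\<in>{1..k}. sg (b j \<and> y j))"
proof -
  have "sg (lin n b y) = (\<Prod>j\<in>{1..n}. sg (b j \<and> y j))"
    unfolding lin_def by (rule sg_odd_card) simp
  also have "\<dots> = (\<Prod>j\<in>{1..k}. sg (b j \<and> y j))"
  proof (rule prod.mono_neutral_right)
    show "\<forall>i\<in>{1..n} - {1..k}. sg (b i \<and> y i) = 1"
      using assms(2) by (auto simp: bvecs_def sg_def)
  qed (use assms in auto)
  finally show ?thesis .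
qed

lemma lin_ignores_tail:
  assumes "b \<in> bvecs {1..k}" "w \<in> bvecs {k<..n}"
  shows "lin n b (\<lambda>j. y j \<or> w j) = lin n b y"
proof -
  have "\<not> (b j \<and> w j)" for j using assms by (auto simp: bvecs_def; force)
  then have "{j\<in>{1..n}. b j \<and> (y j \<or> w j)} = {j\<in>{1..n}. b j \<and> y j}" by auto
  then show ?thesis unfolding lin_def by simp
qed

lemma characters_orthogonal:
  assumes "k \<le> n" "y \<in> bvecs {1..k}" "y' \<in> bvecs {1..k}"
  shows "avg {1..k} (\<lambda>b. sg (lin n b y) * sg (lin n b y')) = (if y = y' then 1 else 0)"
proof -
  have "avg {1..k} (\<lambda>b. sg (lin n b y) * sg (lin n b y'))
      = avg {1..k} (\<lambda>b. \<Prod>j\<in>{1..k}. sg (b j \<and> y j) * sg (b j \<and> y' j))"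
    by (intro avg_cong) (simp add: sg_lin_prod[OF assms(1)] prod.distrib)
  also have "\<dots> = (\<Prod>j\<in>{1..k}. (sg (False \<and> y j) * sg (False \<and> y' j)
                                  + sg (True \<and> y j) * sg (True \<and> y' j)) / 2)"
    by (rule avg_prod_coord) simp
  also have "\<dots> = (\<Prod>j\<in>{1..k}. (if y j = y' j then 1 else 0))"
    by (intro prod.cong refl) (simp add: sg_def)
  also have "\<dots> = (if y = y' then 1 else 0)"
  proof (cases "y = y'")
    case False
    then obtain j where "y j \<noteq> y' j" by auto
    moreover have "j \<in> {1..k}" using calculation assms(2,3) by (auto simp: bvecs_def)
    ultimately have "(\<Prod>j\<in>{1..k}. (if y j = y' j then 1 else 0)) = (0::real)"
      by (intro prod_zero) auto
    then show ?thesis using False by simp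
  qed simp
  finally show ?thesis .
qed

definition head_bias :: "nat \<Rightarrow> nat \<Rightarrow> ((nat \<Rightarrow> bool) \<Rightarrow> bool) \<Rightarrow> (nat \<Rightarrow> bool) \<Rightarrow> real" where
  "head_bias n k f y = avg {k<..n} (\<lambda>w. sg (f (\<lambda>j. y j \<or> w j)))"

lemma bias_lin_head_bias:
  assumes "k \<le> n" "b \<in> bvecs {1..k}"
  shows "bias_lin n f b = avg {1..k} (\<lambda>y. head_bias n k f y * sg (lin n b y))"
proof -
  have U: "{1..n} = {1..k} \<union> {k<..n}" using assms(1) by auto
  have "bias_lin n f b = avg ({1..k} \<union> {k<..n}) (\<lambda>x. sg (f x) * sg (lin n b x))"
    unfolding bias_lin_def bias_on_avg U[symmetric] sg_neq by simp
  also have "\<dots> = avg {1..k} (\<lambda>y. avg {k<..n}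
      (\<lambda>w. sg (f (\<lambda>j. y j \<or> w j)) * sg (lin n b (\<lambda>j. y j \<or> w j))))"
    by (rule avg_Un) auto
  also have "\<dots> = avg {1..k} (\<lambda>y. avg {k<..n} (\<lambda>w. sg (f (\<lambda>j. y j \<or> w j)) * sg (lin n b y)))"
    by (intro avg_cong) (simp add: lin_ignores_tail[OF assms(2)])
  finally show ?thesis by (simp add: avg_mult_right head_bias_def)
qed

lemma head_bias_single_coefficient:
  assumes "k \<le> n" "a \<in> bvecs {1..k}"
    and vanish: "\<forall>b\<in>bvecs {1..k}. b \<noteq> a \<longrightarrow> bias_lin n f b = 0"
    and y': "y' \<in> bvecs {1..k}"
  shows "head_bias n k f y' = bias_lin n f a * sg (lin n a y')"
proof -
  let ?K = "{1..k::nat}"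
  let ?coeff = "\<lambda>b. bias_lin n f b * sg (lin n b y')"
  have "avg ?K ?coeff = avg ?K (\<lambda>b. if b = a then ?coeff a else 0)"
    by (intro avg_cong) (use vanish in auto)
  also have "\<dots> = ?coeff a / 2 ^ k"
    unfolding avg_def using assms(2) by (simp add: sum.delta)
  finally have only_a: "avg ?K ?coeff = ?coeff a / 2 ^ k" .
  have "avg ?K ?coeff
      = avg ?K (\<lambda>b. avg ?K (\<lambda>y. head_bias n k f y * (sg (lin n b y) * sg (lin n b y'))))"
    by (intro avg_cong)
      (simp add: bias_lin_head_bias[OF assms(1)] avg_mult_right[symmetric] mult.assoc)
  also have "\<dots> = avg ?K (\<lambda>y. avg ?K (\<lambda>b. head_bias n k f y * (sg (lin n b y) * sg (lin n b y'))))"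
    by (rule avg_swap)
  also have "\<dots> = avg ?K (\<lambda>y. if y = y' then head_bias n k f y' else 0)"
  proof (intro avg_cong)
    fix y assume y: "y \<in> bvecs ?K"
    show "avg ?K (\<lambda>b. head_bias n k f y * (sg (lin n b y) * sg (lin n b y')))
        = (if y = y' then head_bias n k f y' else 0)"
      unfolding avg_mult_left characters_orthogonal[OF assms(1) y y'] by simp
  qed
  also have "\<dots> = head_bias n k f y' / 2 ^ k"
    unfolding avg_def using y' by (simp add: sum.delta)
  finally show ?thesis using only_a by simp
qed

section \<open>The shifts tau_c\<close>

lemma set_clear_bit:
  fixes c m s :: nat
  assumes "c < 2 ^ s" "m < s" "\<not> bit c m"
  shows "c + 2 ^ m < 2 ^ s" and "bit (c + 2 ^ m) l \<longleftrightarrow> l = m \<or> bit c l"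
proof -
  have set: "c + 2 ^ m = set_bit m c" using assms(3) by (simp add: set_bit_eq)
  have "take_bit s c = c" using assms(1) take_bit_nat_eq_self_iff by blast
  then have "take_bit s (set_bit m c) = set_bit m c"
    using assms by (simp add: take_bit_set_bit_eq)
  then show "c + 2 ^ m < 2 ^ s" using set take_bit_nat_eq_self_iff by metis
  show "bit (c + 2 ^ m) l \<longleftrightarrow> l = m \<or> bit c l" using set by (auto simp: bit_set_bit_iff)
qed

text \<open>Pairing c with c + 2^m: a product of signs over {..<2^s} that is invariant under
  setting bit m is 1, since it is the square of the product over one half.\<close>
lemma prod_pairs_cancel:
  fixes phi :: "nat \<Rightarrow> real"
  assumes "m < s"
    and invariant: "\<forall>c<2 ^ s. \<not> bit c m \<longrightarrow> phi (c + 2 ^ m) = phi c"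
    and sign: "\<forall>c. phi c * phi c = 1"
  shows "(\<Prod>c<2 ^ s. phi c) = 1"
proof -
  define A where "A = {c. c < (2::nat) ^ s \<and> \<not> bit c m}"
  have upper_half: "c \<in> (\<lambda>c. c + 2 ^ m) ` A" if "c < 2 ^ s" "bit c m" for c
  proof -
    have "set_bit m (unset_bit m c) = c"
      by (rule bit_eqI) (use that in \<open>auto simp: bit_simps\<close>)
    then have "c = unset_bit m c + 2 ^ m" by (simp add: set_bit_eq bit_unset_bit_iff)
    moreover have "unset_bit m c \<in> A"
      using that \<open>c = unset_bit m c + 2 ^ m\<close> unfolding A_def by (auto simp: bit_unset_bit_iff)
    ultimately show ?thesis by blast
  qed
  have U: "{..<2 ^ s} = A \<union> (\<lambda>c. c + 2 ^ m) ` A"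
    using upper_half set_clear_bit(1)[OF _ assms(1)] unfolding A_def by auto
  have D: "A \<inter> (\<lambda>c. c + 2 ^ m) ` A = {}"
    using set_clear_bit(2)[OF _ assms(1)] unfolding A_def by auto
  have "(\<Prod>c<2 ^ s. phi c) = (\<Prod>c\<in>A. phi c) * (\<Prod>c\<in>(\<lambda>c. c + 2 ^ m) ` A. phi c)"
    unfolding U by (rule prod.union_disjoint) (use D in \<open>auto simp: A_def\<close>)
  also have "(\<Prod>c\<in>(\<lambda>c. c + 2 ^ m) ` A. phi c) = (\<Prod>c\<in>A. phi (c + 2 ^ m))"
    by (subst prod.reindex) (auto simp: inj_on_def)
  also have "\<dots> = (\<Prod>c\<in>A. phi c)" using invariant unfolding A_def by (intro prod.cong) auto
  also have "(\<Prod>c\<in>A. phi c) * (\<Prod>c\<in>A. phi c) = 1"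
    by (simp add: prod.distrib[symmetric] sign)
  finally show ?thesis .
qed

lemma tau_set_bit:
  assumes i: "i \<in> {1..s}" and c: "c < 2 ^ s" "\<not> bit c (i - 1)"
  shows "tau s M (c + 2 ^ (i - 1)) = tau s M c + M i"
proof -
  have tau_bit: "tau s M d = (\<Sum>l\<in>{1..s}. if bit d (l - 1) then M l else 0)" for d
    unfolding tau_def by (simp add: bit_iff_odd)
  have other_bits: "bit (c + 2 ^ (i - 1)) (l - 1) \<longleftrightarrow> l = i \<or> bit c (l - 1)" if "l \<in> {1..s}" for l
  proof -
    have "i - 1 < s" using i by auto
    then show ?thesis using set_clear_bit(2)[OF c(1) _ c(2), of "l - 1"] that i by auto
  qed
  have "tau s M (c + 2 ^ (i - 1))
      = M i + (\<Sum>l\<in>{1..s} - {i}. if bit (c + 2 ^ (i - 1)) (l - 1) then M l else 0)"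
    unfolding tau_bit sum.remove[OF finite_atLeastAtMost i] using other_bits[OF i] by simp
  also have "(\<Sum>l\<in>{1..s} - {i}. if bit (c + 2 ^ (i - 1)) (l - 1) then M l else 0)
      = (\<Sum>l\<in>{1..s} - {i}. if bit c (l - 1) then M l else 0)"
    using other_bits by (intro sum.cong) auto
  also have "\<dots> = tau s M c"
    unfolding tau_bit sum.remove[OF finite_atLeastAtMost i] using c(2) by simp
  finally show ?thesis by simp
qed

lemma shift_period:
  fixes d :: nat
  assumes i: "i \<in> {1..s}" and c: "c < 2 ^ s" "\<not> bit c (i - 1)" and dvd: "d dvd M i"
  shows "(t + tau s M (c + 2 ^ (i - 1))) mod d = (t + tau s M c) mod d"
proof -
  obtain r where "M i = d * r" using dvd by (auto simp: dvd_def)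
  then show ?thesis unfolding tau_set_bit[OF i c] by (simp add: add.assoc[symmetric])
qed

lemma block_exists:
  fixes ell :: "nat \<Rightarrow> nat"
  assumes "ell 1 = 0" and "j \<in> {1..ell (Suc s)}"
  shows "\<exists>i\<in>{1..s}. ell i < j \<and> j \<le> ell (Suc i)"
proof -
  have "m \<le> s \<Longrightarrow> j \<le> ell (Suc m) \<Longrightarrow> \<exists>i\<in>{1..s}. ell i < j \<and> j \<le> ell (Suc i)" for m
  proof (induction m)
    case 0
    then show ?case using assms by simp
  next
    case (Suc m)
    then show ?case by (cases "j \<le> ell (Suc m)") (auto intro!: bexI[of _ "Suc m"])
  qed
  then show ?thesis using assms(2) by auto
qed

lemma inj_on_shifted_mod:
  fixes t d :: nat
  assumes "inj_on (\<lambda>c. g c mod d) C"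
  shows "inj_on (\<lambda>c. (t + g c) mod d) C"
proof (rule inj_onI)
  fix c c' assume c: "c \<in> C" "c' \<in> C" and eq: "(t + g c) mod d = (t + g c') mod d"
  have "g c mod d = g c' mod d"
  proof (cases "g c \<le> g c'")
    case True
    then have "d dvd (t + g c') - (t + g c)" using eq mod_eq_dvd_iff_nat[of "t + g c" "t + g c'" d] by simp
    then show ?thesis using True mod_eq_dvd_iff_nat[of "g c" "g c'" d] by simp
  next
    case False
    then have "d dvd (t + g c) - (t + g c')" using eq mod_eq_dvd_iff_nat[of "t + g c'" "t + g c" d] by simp
    then show ?thesis using False mod_eq_dvd_iff_nat[of "g c'" "g c" d] by simp
  qed
  then show "c = c'" using assms c by (auto dest: inj_onD)
qed

lemma block_shift_period:
  fixes ell :: "nat \<Rightarrow> nat"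
  assumes l_first: "ell 1 = 0" and l_last: "ell (Suc s) = k"
    and M_dvd: "\<forall>i\<in>{1..s}. \<forall>j\<in>{ell i<..ell (Suc i)}. T j dvd M i"
  shows "\<forall>j\<in>{1..k}. \<exists>m<s. \<forall>c<2 ^ s. \<not> bit c m \<longrightarrow>
           (t + tau s M (c + 2 ^ m)) mod T j = (t + tau s M c) mod T j"
proof
  fix j assume "j \<in> {1..k}"
  then have "j \<in> {1..ell (Suc s)}" using l_last by simp
  from block_exists[where ell=ell, OF l_first this]
  obtain i where i: "i \<in> {1..s}" "j \<in> {ell i<..ell (Suc i)}" by auto
  then have dvd: "T j dvd M i" using M_dvd by blast
  have "\<forall>c<2 ^ s. \<not> bit c (i - 1) \<longrightarrow>
      (t + tau s M (c + 2 ^ (i - 1))) mod T j = (t + tau s M c) mod T j"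
    using shift_period[where M=M, OF i(1) _ _ dvd] by simp
  moreover have "i - 1 < s" using i(1) by auto
  ultimately show "\<exists>m<s. \<forall>c<2 ^ s. \<not> bit c m \<longrightarrow>
      (t + tau s M (c + 2 ^ m)) mod T j = (t + tau s M c) mod T j" by blast
qed

section \<open>The bias of the parity-check sequence\<close>

lemma bias_PC_avg_prod:
  "bias_PC n s M T f t = avg (seq_vars n T)
     (\<lambda>X. \<Prod>c<2 ^ s. sg (f (\<lambda>j. if j \<in> {1..n} then X (j, (t + tau s M c) mod T j) else False)))"
  unfolding bias_PC_def bias_on_avg PC_def seqv_def by (rule avg_cong, rule sg_odd_card) simp

text \<open>Assumption (G)(i) at work, for an arbitrary reading position p c j of x_j at shift c:
  if for every tail variable j > k the shifts read pairwise distinct bits of x_j, then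
  averaging over the tail bits turns the product of signs into a product of head biases.\<close>
lemma avg_tail_bits:
  fixes p :: "nat \<Rightarrow> nat \<Rightarrow> nat" and C :: "nat set"
  assumes "finite C" and "k \<le> n"
    and in_range: "\<forall>j\<in>{k<..n}. \<forall>c\<in>C. p c j < T j"
    and distinct: "\<forall>j\<in>{k<..n}. inj_on (\<lambda>c. p c j) C"
    and X1: "X1 \<in> bvecs {v \<in> seq_vars n T. fst v \<le> k}"
  shows "avg {v \<in> seq_vars n T. k < fst v}
           (\<lambda>X2. \<Prod>c\<in>C. sg (f (\<lambda>j. if j \<in> {1..n} then X1 (j, p c j) \<or> X2 (j, p c j) else False)))
       = (\<Prod>c\<in>C. head_bias n k f (\<lambda>j. j \<in> {1..k} \<and> X1 (j, p c j)))"
proof -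
  define S2 where "S2 = {v \<in> seq_vars n T. k < fst v}"
  define J0 where "J0 = {k<..n}"
  define head where "head c = (\<lambda>j. j \<in> {1..k} \<and> X1 (j, p c j))" for c
  define read where "read c j = (j, p c j)" for c j
  have "seq_vars n T = (SIGMA j:{1..n}. {..<T j})" by (auto simp: seq_vars_def)
  then have fS2: "finite S2" unfolding S2_def by simp
  have input: "(\<lambda>j. if j \<in> {1..n} then X1 (j, p c j) \<or> X2 (j, p c j) else False)
      = (\<lambda>j. head c j \<or> (j \<in> J0 \<and> X2 (read c j)))" if X2: "X2 \<in> bvecs S2" for X2 c
  proof
    fix j
    have "X1 (j, u) \<Longrightarrow> j \<in> {1..k}" "X2 (j, u) \<Longrightarrow> j \<in> J0" for u
      using X1 X2 unfolding bvecs_def S2_def seq_vars_def J0_def by auto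
    then show "(if j \<in> {1..n} then X1 (j, p c j) \<or> X2 (j, p c j) else False)
        = (head c j \<or> (j \<in> J0 \<and> X2 (read c j)))"
      using assms(2) unfolding head_def read_def J0_def by auto
  qed
  have "avg S2 (\<lambda>X2. \<Prod>c\<in>C. sg (f (\<lambda>j. if j \<in> {1..n} then X1 (j, p c j) \<or> X2 (j, p c j) else False)))
      = avg S2 (\<lambda>X2. \<Prod>c\<in>C. sg (f (\<lambda>j. head c j \<or> (j \<in> J0 \<and> X2 (read c j)))))"
    by (intro avg_cong) (simp only: input)
  also have "\<dots> = (\<Prod>c\<in>C. avg (read c ` J0) (\<lambda>X2. sg (f (\<lambda>j. head c j \<or> (j \<in> J0 \<and> X2 (read c j))))))"
  proof (rule avg_prod[OF assms(1) fS2])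
    show "\<forall>c\<in>C. read c ` J0 \<subseteq> S2"
      using in_range unfolding read_def J0_def S2_def seq_vars_def by auto
    show "\<forall>c\<in>C. \<forall>c'\<in>C. c \<noteq> c' \<longrightarrow> read c ` J0 \<inter> read c' ` J0 = {}"
      using distinct unfolding read_def J0_def by (auto dest: inj_onD)
    show "\<forall>c\<in>C. \<forall>X Y. (\<forall>v\<in>read c ` J0. X v = Y v) \<longrightarrow>
        sg (f (\<lambda>j. head c j \<or> (j \<in> J0 \<and> X (read c j))))
        = sg (f (\<lambda>j. head c j \<or> (j \<in> J0 \<and> Y (read c j))))"
    proof (intro ballI allI impI)
      fix c and X Y :: "nat \<times> nat \<Rightarrow> bool" assume "\<forall>v\<in>read c ` J0. X v = Y v"
      then have "(\<lambda>j. head c j \<or> (j \<in> J0 \<and> X (read c j)))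
          = (\<lambda>j. head c j \<or> (j \<in> J0 \<and> Y (read c j)))" by auto
      then show "sg (f (\<lambda>j. head c j \<or> (j \<in> J0 \<and> X (read c j))))
          = sg (f (\<lambda>j. head c j \<or> (j \<in> J0 \<and> Y (read c j))))" by simp
    qed
  qed
  also have "\<dots> = (\<Prod>c\<in>C. head_bias n k f (head c))"
  proof (rule prod.cong[OF refl])
    fix c
    have "inj_on (read c) J0" unfolding read_def by (auto simp: inj_on_def)
    from avg_reindex[OF this, of "\<lambda>w. sg (f (\<lambda>j. head c j \<or> w j))"]
    show "avg (read c ` J0) (\<lambda>X2. sg (f (\<lambda>j. head c j \<or> (j \<in> J0 \<and> X2 (read c j)))))
        = head_bias n k f (head c)"
      unfolding head_bias_def J0_def by simp
  qed
  finally show ?thesis unfolding S2_def head_def .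
qed

text \<open>Divisibility at work: if every head variable j has a bit m whose setting does not
  move the position read from x_j, the product of the characters (-1)^(a.y_c) is 1.\<close>
lemma characters_cancel:
  fixes p :: "nat \<Rightarrow> nat \<Rightarrow> nat"
  assumes "k \<le> n" "a \<in> bvecs {1..k}"
    and period: "\<forall>j\<in>{1..k}. \<exists>m<s. \<forall>c<2 ^ s. \<not> bit c m \<longrightarrow> p (c + 2 ^ m) j = p c j"
  shows "(\<Prod>c<2 ^ s. sg (lin n a (\<lambda>j. j \<in> {1..k} \<and> X (j, p c j)))) = 1"
proof -
  have "(\<Prod>c<2 ^ s. sg (lin n a (\<lambda>j. j \<in> {1..k} \<and> X (j, p c j))))
      = (\<Prod>c<2 ^ s. \<Prod>j\<in>{1..k}. sg (a j \<and> X (j, p c j)))"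
    by (intro prod.cong refl) (simp add: sg_lin_prod[OF assms(1,2)])
  also have "\<dots> = (\<Prod>j\<in>{1..k}. \<Prod>c<2 ^ s. sg (a j \<and> X (j, p c j)))"
    by (rule prod.swap)
  also have "\<dots> = 1"
  proof (rule prod.neutral, rule ballI)
    fix j assume "j \<in> {1..k}"
    then obtain m where "m < s" "\<forall>c<2 ^ s. \<not> bit c m \<longrightarrow> p (c + 2 ^ m) j = p c j"
      using period by blast
    then show "(\<Prod>c<2 ^ s. sg (a j \<and> X (j, p c j))) = 1"
      by (intro prod_pairs_cancel) auto
  qed
  finally show ?thesis .
qed

lemma bias_PC_single_coefficient:
  fixes ell :: "nat \<Rightarrow> nat"
  assumes T_pos: "\<forall>j\<in>{1..n}. T j > 0"
    and l_first: "ell 1 = 0" and l_last: "ell (Suc s) = k" and k_le: "k \<le> n"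
    and M_dvd: "\<forall>i\<in>{1..s}. \<forall>j\<in>{ell i<..ell (Suc i)}. T j dvd M i"
    and G1: "\<forall>j. k < j \<and> j \<le> n \<longrightarrow> inj_on (\<lambda>c. tau s M c mod T j) {..<2 ^ s}"
    and a: "a \<in> bvecs {1..k}"
    and vanish: "\<forall>b\<in>bvecs {1..k}. b \<noteq> a \<longrightarrow> bias_lin n f b = 0"
  shows "bias_PC n s M T f t = bias_lin n f a ^ (2 ^ s)"
proof -
  define p where "p c j = (t + tau s M c) mod T j" for c j
  define F where "F = bias_lin n f a"
  define S1 where "S1 = {v \<in> seq_vars n T. fst v \<le> k}"
  define S2 where "S2 = {v \<in> seq_vars n T. k < fst v}"
  have "seq_vars n T = (SIGMA j:{1..n}. {..<T j})" by (auto simp: seq_vars_def)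
  then have fin: "finite S1" "finite S2" unfolding S1_def S2_def by simp_all
  have split: "seq_vars n T = S1 \<union> S2" "S1 \<inter> S2 = {}" unfolding S1_def S2_def by auto
  have distinct: "\<forall>j\<in>{k<..n}. inj_on (\<lambda>c. p c j) {..<2 ^ s}"
    using G1 unfolding p_def by (auto intro: inj_on_shifted_mod)
  have period: "\<forall>j\<in>{1..k}. \<exists>m<s. \<forall>c<2 ^ s. \<not> bit c m \<longrightarrow> p (c + 2 ^ m) j = p c j"
    unfolding p_def by (rule block_shift_period[where ell=ell, OF l_first l_last M_dvd])
  have "bias_PC n s M T f t = avg S1 (\<lambda>X1. avg S2 (\<lambda>X2. \<Prod>c<2 ^ s.
        sg (f (\<lambda>j. if j \<in> {1..n} then X1 (j, p c j) \<or> X2 (j, p c j) else False))))"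
    unfolding bias_PC_avg_prod split(1) p_def by (rule avg_Un[OF fin split(2)])
  also have "\<dots> = avg S1 (\<lambda>X1. F ^ (2 ^ s))"
  proof (rule avg_cong)
    fix X1 assume X1: "X1 \<in> bvecs S1"
    let ?head = "\<lambda>c j. j \<in> {1..k} \<and> X1 (j, p c j)"
    have "?head c \<in> bvecs {1..k}" for c by (auto simp: bvecs_def)
    then have "(\<Prod>c<2 ^ s. head_bias n k f (?head c)) = (\<Prod>c<2 ^ s. F * sg (lin n a (?head c)))"
      unfolding F_def by (simp add: head_bias_single_coefficient[OF k_le a vanish])
    also have "\<dots> = F ^ (2 ^ s)"
      unfolding prod.distrib characters_cancel[OF k_le a period] by simp
    finally show "avg S2 (\<lambda>X2. \<Prod>c<2 ^ s.
        sg (f (\<lambda>j. if j \<in> {1..n} then X1 (j, p c j) \<or> X2 (j, p c j) else False))) = F ^ (2 ^ s)"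
      using avg_tail_bits[OF _ k_le _ distinct X1[unfolded S1_def]] T_pos
      unfolding S2_def p_def by simp
  qed
  finally show ?thesis using fin(1) by (simp add: avg_const F_def)
qed

text \<open>For a (k-1)-resilient f, every b in V_k other than 1_k has weight below k,
  so 1_k is the only candidate for a nonzero bias in V_k.\<close>
lemma resilient_vanish:
  assumes res: "resilient n (k - 1) f" and "k \<le> n"
    and b: "b \<in> bvecs {1..k}" and ne: "b \<noteq> (\<lambda>j. 1 \<le> j \<and> j \<le> k)"
  shows "bias_lin n f b = 0"
proof -
  obtain j where "b j \<noteq> (1 \<le> j \<and> j \<le> k)" using ne by auto
  then have j: "j \<in> {1..k}" "\<not> b j" using b by (auto simp: bvecs_def)
  have "{i\<in>{1..n}. b i} \<subseteq> {1..k}" using b by (auto simp: bvecs_def)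
  then have "{i\<in>{1..n}. b i} \<subset> {1..k}" using j by blast
  then have "hweight n b < k" unfolding hweight_def by (metis card_atLeastAtMost diff_Suc_1
      finite_atLeastAtMost psubset_card_mono)
  moreover have "b \<in> bvecs {1..n}" using b assms(2) by (auto simp: bvecs_def)
  ultimately show ?thesis using res unfolding resilient_def by auto
qed

theorem theorem4:
  fixes n s k :: nat and T q M ell :: "nat \<Rightarrow> nat"
    and f :: "(nat \<Rightarrow> bool) \<Rightarrow> bool" and t :: nat
  assumes T_pos: "\<forall>j\<in>{1..n}. T j > 0"
    and s_pos: "s \<ge> 1"
    and l_first: "ell 1 = 0"
    and l_mono: "\<forall>i\<in>{1..s}. ell i < ell (Suc i)"
    and l_last: "ell (Suc s) = k"
    and k_le: "k \<le> n"
    and q_pos: "\<forall>i\<in>{1..s}. q i > 0"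
    and M_def: "\<forall>i\<in>{1..s}. M i = q i * Lcm (T ` {ell i<..ell (Suc i)})"
    and G1: "\<forall>j. k < j \<and> j \<le> n \<longrightarrow> inj_on (\<lambda>c. tau s M c mod T j) {..<2 ^ s}"
    and G2: "\<forall>i\<in>{1..s}. \<forall>j\<in>{ell i<..ell (Suc i)}.
               inj_on (\<lambda>c. tau_excl s M i c mod T j) {c. c < 2 ^ s \<and> \<not> odd (c div 2 ^ (i - 1))}"
  shows "(\<forall>a. a \<in> bvecs {1..k} \<and> bias_lin n f a \<noteq> 0
              \<and> (\<forall>b\<in>bvecs {1..k}. bias_lin n f b \<noteq> 0 \<longrightarrow> b = a)
            \<longrightarrow> bias_PC n s M T f t = (bias_lin n f a) ^ (2 ^ s))
       \<and> (resilient n (k - 1) f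
            \<longrightarrow> bias_PC n s M T f t = (bias_lin n f (\<lambda>j. 1 \<le> j \<and> j \<le> k)) ^ (2 ^ s))"
proof -
  have M_dvd: "\<forall>i\<in>{1..s}. \<forall>j\<in>{ell i<..ell (Suc i)}. T j dvd M i"
    using M_def by (auto intro: dvd_mult dvd_Lcm)
  note single = bias_PC_single_coefficient[OF T_pos l_first l_last k_le M_dvd G1]
  have one: "(\<lambda>j. 1 \<le> j \<and> j \<le> k) \<in> bvecs {1..k}" by (auto simp: bvecs_def)
  show ?thesis
  proof (intro conjI allI impI)
    fix a assume "a \<in> bvecs {1..k} \<and> bias_lin n f a \<noteq> 0
        \<and> (\<forall>b\<in>bvecs {1..k}. bias_lin n f b \<noteq> 0 \<longrightarrow> b = a)"
    then show "bias_PC n s M T f t = bias_lin n f a ^ (2 ^ s)"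
      by (intro single) auto
  next
    assume "resilient n (k - 1) f"
    then have "\<forall>b\<in>bvecs {1..k}. b \<noteq> (\<lambda>j. 1 \<le> j \<and> j \<le> k) \<longrightarrow> bias_lin n f b = 0"
      using resilient_vanish[OF _ k_le] by blast
    then show "bias_PC n s M T f t = bias_lin n f (\<lambda>j. 1 \<le> j \<and> j \<le> k) ^ (2 ^ s)"
      by (rule single[OF one])
  qed
qed

end
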